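(* Assume the setting below and sharp missingness: $M_i(1)=M_i(0)$ for all $i$. Fix $\boldsymbol\delta\in\mathbb R^n$ and let $\mathcal S=\{i:M_i=1\}$, $n_{\mathcal S1}=\sum_{i\in\mathcal S}Z_i$, $n_{\mathcal S0}=|\mathcal S|-n_{\mathcal S1}$. Define $t_{\mathrm R,\phi,\mathcal S}(\boldsymbol z,\boldsymbol y)=t_{\mathrm R,\phi}(\boldsymbol z_{\mathcal S},\boldsymbol y_{\mathcal S})$ (statistic computed on the subvectors indexed by $\mathcal S$, original order kept) and $G_{\mathrm R,\phi,\mathcal S}(c)=\mathbb P(t_{\mathrm R,\phi,\mathcal S}(\boldsymbol A,\boldsymbol y_0)\ge c)$, where $\boldsymbol A_{\mathcal S}$ is uniform over assignments of the units of $\mathcal S$ with exactly $n_{\mathcal S1}$ treated and $\boldsymbol y_0\in\mathbb R^n$ is any fixed vector. Then $p_{\boldsymbol Z,\boldsymbol\delta,\mathcal S}=G_{\mathrm R,\phi,\mathcal S}\big(t_{\mathrm R,\phi,\mathcal S}(\boldsymbol Z,\boldsymbol Y-\boldsymbol\delta\circ\boldsymbol Z)\big)$ is a valid p-value for $H_{\boldsymbol\delta}:\boldsymbol\tau=\boldsymbol\delta$: if $H_{\boldsymbol\delta}$ holds, $\mathbb P(p_{\boldsymbol Z,\boldsymbol\delta,\mathcal S}\le\alpha)\le\alpha$ for all $\alpha\in(0,1)$.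
   Context: There are $n$ units with fixed potential outcomes $Y_i^\star(0),Y_i^\star(1)\in\mathbb R$ and fixed potential missingness indicators $M_i(0),M_i(1)\in\{0,1\}$; $\tau_i=Y_i^\star(1)-Y_i^\star(0)$. $\boldsymbol Z\in\{0,1\}^n$ is from a completely randomized experiment: uniform over vectors with exactly $n_1$ ones ($n_1,n_0\ge1$ fixed, $n_1+n_0=n$), independent of all potential quantities; probabilities are over $\boldsymbol Z$. $M_i=Z_iM_i(1)+(1-Z_i)M_i(0)$; the realized outcome $Z_iY_i^\star(1)+(1-Z_i)Y_i^\star(0)$ is observed, denoted $Y_i$, iff $M_i=1$; only coordinates in $\mathcal S$ of $\boldsymbol Y-\boldsymbol\delta\circ\boldsymbol Z$ are used. $\circ$ is the entrywise product. $\psi_{i,j}(y,y')=\mathbf 1\{y>y'\}+\mathbf 1\{y=y'\}\mathbf 1\{i\ge j\}$; $\mathrm{rank}_i(\boldsymbol y)=\sum_j\psi_{i,j}(y_i,y_j)$; $\phi$ nondecreasing real function on the nonnegative integers; $t_{\mathrm R,\phi}(\boldsymbol z,\boldsymbol y)$ is either $\sum_i z_i\phi(\mathrm{rank}_i(\boldsymbol y))$ or $\sum_i z_i\phi(\sum_j(1-z_j)\psi_{i,j}(y_i,y_j))$ (sums over units of the given vectors); the result holds for either. *)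

theory Defs
  imports "HOL-Probability.Probability_Mass_Function"
begin

text \<open>Units are indexed by 0..<n. Assignment vectors and missingness indicators are
nat-valued 0/1 vectors (functions nat => nat), outcome vectors are nat => real.\<close>

definition psi :: "nat \<Rightarrow> nat \<Rightarrow> real \<Rightarrow> real \<Rightarrow> nat" where
  "psi i j y y' = (if y > y' then 1 else 0) + (if y = y' \<and> i \<ge> j then 1 else 0)"

definition rank_vec :: "nat \<Rightarrow> (nat \<Rightarrow> real) \<Rightarrow> nat \<Rightarrow> nat" where
  "rank_vec k y i = (\<Sum>j<k. psi i j (y i) (y j))"

definition t_rank :: "(nat \<Rightarrow> real) \<Rightarrow> nat \<Rightarrow> (nat \<Rightarrow> nat) \<Rightarrow> (nat \<Rightarrow> real) \<Rightarrow> real" where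
  "t_rank \<phi> k z y = (\<Sum>i<k. real (z i) * \<phi> (rank_vec k y i))"

definition t_ctrl :: "(nat \<Rightarrow> real) \<Rightarrow> nat \<Rightarrow> (nat \<Rightarrow> nat) \<Rightarrow> (nat \<Rightarrow> real) \<Rightarrow> real" where
  "t_ctrl \<phi> k z y = (\<Sum>i<k. real (z i) * \<phi> (\<Sum>j<k. (1 - z j) * psi i j (y i) (y j)))"

definition subvec :: "nat set \<Rightarrow> (nat \<Rightarrow> 'a) \<Rightarrow> nat \<Rightarrow> 'a" where
  "subvec S v k = v (sorted_list_of_set S ! k)"

definition t_sub :: "(nat \<Rightarrow> (nat \<Rightarrow> nat) \<Rightarrow> (nat \<Rightarrow> real) \<Rightarrow> real)
    \<Rightarrow> nat set \<Rightarrow> (nat \<Rightarrow> nat) \<Rightarrow> (nat \<Rightarrow> real) \<Rightarrow> real" where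
  "t_sub tR S z y = tR (card S) (subvec S z) (subvec S y)"

definition assignments :: "nat set \<Rightarrow> nat \<Rightarrow> (nat \<Rightarrow> nat) set" where
  "assignments I m = {z. (\<forall>i. z i \<le> 1) \<and> (\<forall>i. i \<notin> I \<longrightarrow> z i = 0) \<and> (\<Sum>i\<in>I. z i) = m}"

definition G_sub :: "(nat \<Rightarrow> (nat \<Rightarrow> nat) \<Rightarrow> (nat \<Rightarrow> real) \<Rightarrow> real)
    \<Rightarrow> nat set \<Rightarrow> nat \<Rightarrow> (nat \<Rightarrow> real) \<Rightarrow> real \<Rightarrow> real" where
  "G_sub tR S m y0 c = measure_pmf.prob (pmf_of_set (assignments S m)) {a. t_sub tR S a y0 \<ge> c}"

definition observed_set :: "nat \<Rightarrow> (nat \<Rightarrow> nat) \<Rightarrow> (nat \<Rightarrow> nat) \<Rightarrow> (nat \<Rightarrow> nat) \<Rightarrow> nat set" where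
  "observed_set n M0 M1 z = {i. i < n \<and> z i * M1 i + (1 - z i) * M0 i = 1}"

definition realized :: "(nat \<Rightarrow> real) \<Rightarrow> (nat \<Rightarrow> real) \<Rightarrow> (nat \<Rightarrow> nat) \<Rightarrow> nat \<Rightarrow> real" where
  "realized Y0 Y1 z i = real (z i) * Y1 i + (1 - real (z i)) * Y0 i"

definition p_value :: "(nat \<Rightarrow> (nat \<Rightarrow> nat) \<Rightarrow> (nat \<Rightarrow> real) \<Rightarrow> real) \<Rightarrow> nat
    \<Rightarrow> (nat \<Rightarrow> nat) \<Rightarrow> (nat \<Rightarrow> nat) \<Rightarrow> (nat \<Rightarrow> real) \<Rightarrow> (nat \<Rightarrow> real)
    \<Rightarrow> (nat \<Rightarrow> real) \<Rightarrow> (nat \<Rightarrow> real) \<Rightarrow> (nat \<Rightarrow> nat) \<Rightarrow> real" where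
  "p_value tR n M0 M1 Y0 Y1 \<delta> y0 z =
    (let S = observed_set n M0 M1 z
     in G_sub tR S (\<Sum>i\<in>S. z i) y0
          (t_sub tR S z (\<lambda>i. realized Y0 Y1 z i - \<delta> i * real (z i))))"

end

(*
  Under sharp missingness the observed set S = {i. M_i = 1} does not depend on Z, and under
  H_delta the adjusted outcomes Y - delta o Z equal Y(0), so the p-value is the randomization
  p-value P(T(A) >= T(Z_S)) of the fixed statistic T(a) = t_{R,phi,S}(a, Y(0)), with A uniform
  over the assignments of S with n_{S1} treated units.  Conditionally on n_{S1} = m, Z_S is
  uniform over these assignments, since each of them extends in equally many ways to an
  assignment of all units.  A randomization p-value over a uniform reference set is valid: the
  points a with P(T(A) >= T(a)) <= alpha all lie above the one among them minimising T, so there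
  are at most alpha times as many of them as reference points.

  That the reference distribution may be computed at any y0 is the distribution-freeness of rank
  statistics: they see the outcomes only through the permutation sorting them (ties broken by
  index), and the uniform assignment is invariant under that permutation.
*)

theory Submission
  imports Defs
begin

definition restrict_to :: "nat set \<Rightarrow> (nat \<Rightarrow> nat) \<Rightarrow> nat \<Rightarrow> nat" where
  "restrict_to I z i = (if i \<in> I then z i else 0)"

lemma finite_assignments:
  assumes "finite I"
  shows "finite (assignments I m)"
proof -
  have "assignments I m \<subseteq> (\<lambda>T i. if i \<in> T then 1 else 0) ` Pow I"
  proof
    fix z assume z: "z \<in> assignments I m"
    then have "z = (\<lambda>i. if i \<in> {i\<in>I. z i = 1} then 1 else 0)"
      unfolding assignments_def by (force simp: le_Suc_eq)
    then show "z \<in> (\<lambda>T i. if i \<in> T then 1 else 0) ` Pow I" by blast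
  qed
  then show ?thesis using assms finite_subset by blast
qed

lemma assignments_nonempty:
  assumes "finite U" "m \<le> card U"
  shows "assignments U m \<noteq> {}"
proof -
  obtain T where T: "T \<subseteq> U" "card T = m" "finite T"
    using obtain_subset_with_card_n[OF assms(2)] by blast
  have "(\<Sum>i\<in>U. if i \<in> T then 1 else 0) = m"
    using T assms(1) by (simp add: sum.If_cases Int_absorb1)
  then have "(\<lambda>i. if i \<in> T then 1 else 0) \<in> assignments U m"
    using T unfolding assignments_def by auto
  then show ?thesis by blast
qed

lemma restrict_to_in_assignments:
  "z \<in> assignments U n \<Longrightarrow> restrict_to I z \<in> assignments I (\<Sum>i\<in>I. z i)"
  unfolding assignments_def restrict_to_def by simp

lemma add_in_assignments:
  assumes "I \<inter> J = {}" "a \<in> assignments I m" "b \<in> assignments J k"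
    "finite I" "finite J"
  shows "(\<lambda>i. a i + b i) \<in> assignments (I \<union> J) (m + k)"
proof -
  have a0: "\<forall>i. i \<notin> I \<longrightarrow> a i = 0" and b0: "\<forall>i. i \<notin> J \<longrightarrow> b i = 0"
    using assms(2,3) unfolding assignments_def by auto
  then have "\<forall>i\<in>J. a i = 0" "\<forall>i\<in>I. b i = 0"
    using assms(1) by auto
  then have "(\<Sum>i\<in>I \<union> J. a i + b i) = (\<Sum>i\<in>I. a i) + (\<Sum>i\<in>J. b i)"
    using assms(1,4,5) by (simp add: sum.union_disjoint sum.distrib)
  moreover have "a i + b i \<le> 1" for i
    using assms(2,3) a0 \<open>\<forall>i\<in>I. b i = 0\<close> unfolding assignments_def
    by (cases "i \<in> I") auto
  ultimately show ?thesis using assms(2,3) unfolding assignments_def by auto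
qed

lemma bij_betw_assignments:
  assumes "bij_betw h I J"
  shows "bij_betw (\<lambda>a x. if x \<in> I then a (h x) else 0) (assignments J m) (assignments I m)"
proof (rule bij_betw_byWitness[where f'="\<lambda>b y. if y \<in> J then b (inv_into I h y) else 0"])
  have hJ: "\<And>x. x \<in> I \<Longrightarrow> h x \<in> J" and h'I: "\<And>y. y \<in> J \<Longrightarrow> inv_into I h y \<in> I"
    using assms bij_betwE bij_betw_inv_into by blast+
  have hh': "\<And>y. y \<in> J \<Longrightarrow> h (inv_into I h y) = y"
    using assms bij_betw_inv_into_right by metis
  have h'h: "\<And>x. x \<in> I \<Longrightarrow> inv_into I h (h x) = x"
    using assms bij_betw_inv_into_left by metis
  show "\<forall>a\<in>assignments J m. (\<lambda>y. if y \<in> J then (if inv_into I h y \<in> I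
          then a (h (inv_into I h y)) else 0) else 0) = a"
    using hh' h'I unfolding assignments_def by auto
  show "\<forall>a\<in>assignments I m. (\<lambda>x. if x \<in> I then (if h x \<in> J
          then a (inv_into I h (h x)) else 0) else 0) = a"
    using h'h hJ unfolding assignments_def by auto
  have "(\<Sum>x\<in>I. a (h x)) = (\<Sum>y\<in>J. a y)" for a :: "nat \<Rightarrow> nat"
    using sum.reindex_bij_betw[OF assms] .
  then show "(\<lambda>a x. if x \<in> I then a (h x) else 0) ` assignments J m \<subseteq> assignments I m"
    unfolding assignments_def by auto
  have "(\<Sum>y\<in>J. a (inv_into I h y)) = (\<Sum>x\<in>I. a x)" for a :: "nat \<Rightarrow> nat"
    using sum.reindex_bij_betw[OF bij_betw_inv_into[OF assms]] .
  then show "(\<lambda>b y. if y \<in> J then b (inv_into I h y) else 0) ` assignments I m \<subseteq> assignments J m"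
    unfolding assignments_def by auto
qed

lemma restrict_to_add_assignments:
  assumes "I \<inter> J = {}" "a \<in> assignments I m" "b \<in> assignments J k"
  shows "restrict_to I (\<lambda>i. a i + b i) = a" "(\<Sum>i\<in>I. a i + b i) = m"
proof -
  have "\<forall>i. i \<notin> I \<longrightarrow> a i = 0" "\<forall>i. i \<notin> J \<longrightarrow> b i = 0" "(\<Sum>i\<in>I. a i) = m"
    using assms(2,3) unfolding assignments_def by auto
  moreover have "\<forall>i\<in>I. b i = 0"
    using calculation(2) assms(1) by auto
  ultimately show "restrict_to I (\<lambda>i. a i + b i) = a" "(\<Sum>i\<in>I. a i + b i) = m"
    by (auto simp: restrict_to_def fun_eq_iff sum.distrib)
qed

lemma bij_betw_assignments_split:
  assumes "finite I" "finite J" "I \<inter> J = {}"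
  shows "bij_betw (\<lambda>(m, a, b) i. a i + b i)
     (SIGMA m:{..n}. assignments I m \<times> assignments J (n - m)) (assignments (I \<union> J) n)"
proof (rule bij_betw_byWitness[where
      f'="\<lambda>z. ((\<Sum>i\<in>I. z i), restrict_to I z, restrict_to J z)"])
  show "\<forall>x\<in>SIGMA m:{..n}. assignments I m \<times> assignments J (n - m).
      (\<lambda>z. ((\<Sum>i\<in>I. z i), restrict_to I z, restrict_to J z)) ((\<lambda>(m, a, b) i. a i + b i) x) = x"
  proof
    fix x assume "x \<in> (SIGMA m:{..n}. assignments I m \<times> assignments J (n - m))"
    then obtain m a b where x: "x = (m, a, b)"
      and a: "a \<in> assignments I m" and b: "b \<in> assignments J (n - m)" by blast
    have "restrict_to J (\<lambda>i. b i + a i) = b"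
      using restrict_to_add_assignments[OF _ b a] assms(3) by blast
    then show "(\<lambda>z. ((\<Sum>i\<in>I. z i), restrict_to I z, restrict_to J z))
        ((\<lambda>(m, a, b) i. a i + b i) x) = x"
      unfolding x using restrict_to_add_assignments[OF assms(3) a b] by (simp add: add.commute)
  qed
  show "\<forall>z\<in>assignments (I \<union> J) n.
      (\<lambda>(m, a, b) i. a i + b i) ((\<Sum>i\<in>I. z i), restrict_to I z, restrict_to J z) = z"
    using assms(3) unfolding assignments_def restrict_to_def by (auto simp: fun_eq_iff)
  show "(\<lambda>(m, a, b) i. a i + b i) ` (SIGMA m:{..n}. assignments I m \<times> assignments J (n - m))
      \<subseteq> assignments (I \<union> J) n"
  proof
    fix z assume "z \<in> (\<lambda>(m, a, b) i. a i + b i) `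
      (SIGMA m:{..n}. assignments I m \<times> assignments J (n - m))"
    then obtain m a b where "z = (\<lambda>i. a i + b i)" "m \<le> n"
      "a \<in> assignments I m" "b \<in> assignments J (n - m)" by auto
    then show "z \<in> assignments (I \<union> J) n"
      using add_in_assignments[OF assms(3) _ _ assms(1,2), of a m b "n - m"] by simp
  qed
  show "(\<lambda>z. ((\<Sum>i\<in>I. z i), restrict_to I z, restrict_to J z)) ` assignments (I \<union> J) n
      \<subseteq> (SIGMA m:{..n}. assignments I m \<times> assignments J (n - m))"
  proof
    fix x assume "x \<in> (\<lambda>z. ((\<Sum>i\<in>I. z i), restrict_to I z, restrict_to J z)) `
      assignments (I \<union> J) n"
    then obtain z where x: "x = ((\<Sum>i\<in>I. z i), restrict_to I z, restrict_to J z)"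
      and z: "z \<in> assignments (I \<union> J) n" by blast
    have "(\<Sum>i\<in>I. z i) + (\<Sum>i\<in>J. z i) = n"
      using z assms unfolding assignments_def by (simp add: sum.union_disjoint)
    then show "x \<in> (SIGMA m:{..n}. assignments I m \<times> assignments J (n - m))"
      unfolding x using restrict_to_in_assignments[OF z, of I] restrict_to_in_assignments[OF z, of J]
      by auto
  qed
qed

lemma sum_assignments_split:
  assumes "finite I" "finite J" "I \<inter> J = {}"
  shows "(\<Sum>z\<in>assignments (I \<union> J) n. h z)
    = (\<Sum>m\<le>n. \<Sum>a\<in>assignments I m. \<Sum>b\<in>assignments J (n - m). h (\<lambda>i. a i + b i))"
proof -
  have "(\<Sum>z\<in>assignments (I \<union> J) n. h z)
      = (\<Sum>(m, a, b)\<in>(SIGMA m:{..n}. assignments I m \<times> assignments J (n - m)). h (\<lambda>i. a i + b i))"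
    using sum.reindex_bij_betw[OF bij_betw_assignments_split[OF assms, of n], of h]
    by (simp add: case_prod_unfold)
  also have "\<dots> = (\<Sum>m\<le>n. \<Sum>a\<in>assignments I m. \<Sum>b\<in>assignments J (n - m). h (\<lambda>i. a i + b i))"
    using assms by (simp add: sum.Sigma finite_assignments sum.cartesian_product)
  finally show ?thesis .
qed

lemma card_permutation_pvalue_le:
  fixes T :: "'a \<Rightarrow> real"
  assumes "finite B" "0 \<le> \<alpha>"
  shows "real (card (B \<inter> {a. measure_pmf.prob (pmf_of_set B) {b. T a \<le> T b} \<le> \<alpha>}))
    \<le> \<alpha> * card B"
proof (cases "B \<inter> {a. measure_pmf.prob (pmf_of_set B) {b. T a \<le> T b} \<le> \<alpha>} = {}")
  case True
  then show ?thesis using assms(2) by simp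
next
  case False
  define R where "R = B \<inter> {a. measure_pmf.prob (pmf_of_set B) {b. T a \<le> T b} \<le> \<alpha>}"
  have "finite R" "R \<noteq> {}" using assms(1) False unfolding R_def by auto
  then have "Min (T ` R) \<in> T ` R" by simp
  then obtain a0 where a0: "a0 \<in> R" "T a0 = Min (T ` R)" by auto
  then have "R \<subseteq> B \<inter> {b. T a0 \<le> T b}"
    using \<open>finite R\<close> unfolding R_def by auto
  then have "real (card R) \<le> card (B \<inter> {b. T a0 \<le> T b})"
    using assms(1) by (simp add: card_mono)
  also have "\<dots> \<le> \<alpha> * card B"
  proof -
    have "B \<noteq> {}" "a0 \<in> B" "measure_pmf.prob (pmf_of_set B) {b. T a0 \<le> T b} \<le> \<alpha>"
      using a0(1) unfolding R_def by auto
    then show ?thesis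
      using assms(1) by (simp add: measure_pmf_of_set divide_le_eq card_gt_0_iff)
  qed
  finally show ?thesis unfolding R_def .
qed

lemma conditional_randomization_test_valid:
  fixes T :: "(nat \<Rightarrow> nat) \<Rightarrow> real"
  assumes "finite U" "S \<subseteq> U" "assignments U n \<noteq> {}" "0 \<le> \<alpha>"
  shows "measure_pmf.prob (pmf_of_set (assignments U n))
    {z. measure_pmf.prob (pmf_of_set (assignments S (\<Sum>i\<in>S. z i)))
          {b. T (restrict_to S z) \<le> T b} \<le> \<alpha>} \<le> \<alpha>"
proof -
  let ?A = "assignments U n" and ?B = "assignments S" and ?C = "\<lambda>m. assignments (U - S) (n - m)"
  define valid where "valid m a \<longleftrightarrow> measure_pmf.prob (pmf_of_set (?B m)) {b. T a \<le> T b} \<le> \<alpha>"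
    for m a
  have split: "S \<union> (U - S) = U" "S \<inter> (U - S) = {}" "finite S" "finite (U - S)"
    using assms(1,2) finite_subset by auto
  note sum_split = sum_assignments_split[OF split(3,4,2), unfolded split(1)]
  have "real (card (?A \<inter> {z. valid (\<Sum>i\<in>S. z i) (restrict_to S z)}))
      = (\<Sum>z\<in>?A. of_bool (valid (\<Sum>i\<in>S. z i) (restrict_to S z)))"
    using assms(1) by (simp add: finite_assignments)
  also have "\<dots> = (\<Sum>m\<le>n. \<Sum>a\<in>?B m. \<Sum>b\<in>?C m. of_bool (valid m a))"
    unfolding sum_split using restrict_to_add_assignments[OF split(2)]
    by (intro sum.cong refl) simp
  also have "\<dots> = (\<Sum>m\<le>n. real (card (?C m)) * card (?B m \<inter> {a. valid m a}))"
    using split(3) by (simp add: finite_assignments mult.commute)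
  also have "\<dots> \<le> (\<Sum>m\<le>n. real (card (?C m)) * (\<alpha> * card (?B m)))"
    unfolding valid_def using split(3) assms(4)
    by (intro sum_mono mult_left_mono card_permutation_pvalue_le finite_assignments) auto
  also have "\<dots> = \<alpha> * (\<Sum>m\<le>n. \<Sum>a\<in>?B m. \<Sum>b\<in>?C m. 1)"
    by (simp add: sum_distrib_left mult_ac)
  also have "\<dots> = \<alpha> * card ?A"
    using sum_split[where h="\<lambda>_. 1 :: real"] by simp
  finally show ?thesis
    using assms(1,3) unfolding valid_def
    by (simp add: measure_pmf_of_set finite_assignments card_gt_0_iff divide_le_eq)
qed

definition rank_less :: "(nat \<Rightarrow> real) \<Rightarrow> nat \<Rightarrow> nat \<Rightarrow> bool" where
  "rank_less w j i \<longleftrightarrow> w j < w i \<or> (w j = w i \<and> j < i)"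

text \<open>For \<open>i < k\<close>, \<open>sort_position k w i = rank_vec k w i - 1\<close>.\<close>

definition sort_position :: "nat \<Rightarrow> (nat \<Rightarrow> real) \<Rightarrow> nat \<Rightarrow> nat" where
  "sort_position k w i = card {j\<in>{..<k}. rank_less w j i}"

lemma rank_less_trans: "rank_less w a b \<Longrightarrow> rank_less w b c \<Longrightarrow> rank_less w a c"
  unfolding rank_less_def by auto

lemma rank_less_irrefl: "\<not> rank_less w a a"
  unfolding rank_less_def by auto

lemma rank_less_linear: "rank_less w a b \<or> a = b \<or> rank_less w b a"
  unfolding rank_less_def by auto

lemma psi_eq_rank_less: "psi i j (w i) (w j) = (if rank_less w j i \<or> j = i then 1 else 0)"
  unfolding psi_def rank_less_def by auto

lemma sort_position_strict_mono:
  assumes "j < k" "rank_less w j i"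
  shows "sort_position k w j < sort_position k w i"
  unfolding sort_position_def
proof (rule psubset_card_mono)
  show "{l\<in>{..<k}. rank_less w l j} \<subset> {l\<in>{..<k}. rank_less w l i}"
    using assms rank_less_trans[of w _ j i] rank_less_irrefl[of w j] by auto
qed simp

lemma sort_position_less: "i < k \<Longrightarrow> sort_position k w i < k"
  unfolding sort_position_def
  using psubset_card_mono[of "{..<k}" "{j\<in>{..<k}. rank_less w j i}"] rank_less_irrefl[of w i]
  by auto

lemma sort_position_le_iff:
  assumes "i < k" "j < k"
  shows "sort_position k w j \<le> sort_position k w i \<longleftrightarrow> rank_less w j i \<or> j = i"
  using sort_position_strict_mono[OF assms(1), of w j] sort_position_strict_mono[OF assms(2), of w i]
    rank_less_linear[of w i j] by auto

lemma bij_betw_sort_position: "bij_betw (sort_position k w) {..<k} {..<k}"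
proof -
  have "inj_on (sort_position k w) {..<k}"
    using sort_position_le_iff rank_less_trans rank_less_irrefl
    by (intro inj_onI) (metis le_refl lessThan_iff)
  moreover have "sort_position k w ` {..<k} \<subseteq> {..<k}"
    using sort_position_less by auto
  ultimately show ?thesis
    unfolding bij_betw_def by (simp add: endo_inj_surj)
qed

lemma psi_eq_sort_position:
  assumes "i < k" "j < k"
  shows "psi i j (w i) (w j) = (if sort_position k w j \<le> sort_position k w i then 1 else 0)"
  using sort_position_le_iff[OF assms] by (simp add: psi_eq_rank_less)

lemma psi_of_nat: "psi i j (real i) (real j) = (if j \<le> i then 1 else 0)"
  unfolding psi_def by auto

definition rank_stat ::
    "(nat \<Rightarrow> nat) \<Rightarrow> (nat \<Rightarrow> real) \<Rightarrow> nat \<Rightarrow> (nat \<Rightarrow> nat) \<Rightarrow> (nat \<Rightarrow> real) \<Rightarrow> real" where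
  "rank_stat g \<phi> k z w = (\<Sum>i<k. real (z i) * \<phi> (\<Sum>j<k. g (z j) * psi i j (w i) (w j)))"

lemma t_rank_eq_rank_stat: "t_rank \<phi> = rank_stat (\<lambda>_. 1) \<phi>"
  by (simp add: fun_eq_iff t_rank_def rank_vec_def rank_stat_def)

lemma t_ctrl_eq_rank_stat: "t_ctrl \<phi> = rank_stat (\<lambda>x. 1 - x) \<phi>"
  by (simp add: fun_eq_iff t_ctrl_def rank_stat_def)

lemma rank_stat_cong:
  "(\<And>p. p < k \<Longrightarrow> z p = z' p) \<Longrightarrow> (\<And>p. p < k \<Longrightarrow> w p = w' p)
    \<Longrightarrow> rank_stat g \<phi> k z w = rank_stat g \<phi> k z' w'"
  unfolding rank_stat_def by (intro sum.cong refl) simp_all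

lemma rank_stat_reindex:
  assumes \<pi>: "bij_betw \<pi> {..<k} {..<k}"
    and psi: "\<And>i j. i < k \<Longrightarrow> j < k \<Longrightarrow> psi (\<pi> i) (\<pi> j) (w (\<pi> i)) (w (\<pi> j)) = psi i j (v i) (v j)"
  shows "rank_stat g \<phi> k z w = rank_stat g \<phi> k (z \<circ> \<pi>) v"
proof -
  have "rank_stat g \<phi> k z w
      = (\<Sum>i<k. real (z (\<pi> i)) * \<phi> (\<Sum>j<k. g (z j) * psi (\<pi> i) j (w (\<pi> i)) (w j)))"
    unfolding rank_stat_def by (rule sum.reindex_bij_betw[OF \<pi>, symmetric])
  also have "\<dots> = (\<Sum>i<k. real (z (\<pi> i))
      * \<phi> (\<Sum>j<k. g (z (\<pi> j)) * psi (\<pi> i) (\<pi> j) (w (\<pi> i)) (w (\<pi> j))))"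
  proof (rule sum.cong[OF refl])
    fix i
    show "real (z (\<pi> i)) * \<phi> (\<Sum>j<k. g (z j) * psi (\<pi> i) j (w (\<pi> i)) (w j))
        = real (z (\<pi> i)) * \<phi> (\<Sum>j<k. g (z (\<pi> j)) * psi (\<pi> i) (\<pi> j) (w (\<pi> i)) (w (\<pi> j)))"
      by (simp only: sum.reindex_bij_betw[OF \<pi>, where g="\<lambda>j. g (z j) * psi (\<pi> i) j (w (\<pi> i)) (w j)"])
  qed
  also have "\<dots> = rank_stat g \<phi> k (z \<circ> \<pi>) v"
    unfolding rank_stat_def using psi by (intro sum.cong refl) simp_all
  finally show ?thesis .
qed

lemma rank_stat_eq_sorted:
  "rank_stat g \<phi> k z w = rank_stat g \<phi> k (z \<circ> inv_into {..<k} (sort_position k w)) real"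
proof (rule rank_stat_reindex)
  let ?\<pi> = "inv_into {..<k} (sort_position k w)"
  show \<pi>: "bij_betw ?\<pi> {..<k} {..<k}"
    using bij_betw_inv_into[OF bij_betw_sort_position] .
  fix i j assume ij: "i < k" "j < k"
  have \<pi>_less: "\<And>p. p < k \<Longrightarrow> ?\<pi> p < k"
    using \<pi> bij_betwE by blast
  have "\<And>p. p < k \<Longrightarrow> sort_position k w (?\<pi> p) = p"
    using bij_betw_inv_into_right[OF bij_betw_sort_position] by blast
  then show "psi (?\<pi> i) (?\<pi> j) (w (?\<pi> i)) (w (?\<pi> j)) = psi i j (real i) (real j)"
    using psi_eq_sort_position[OF \<pi>_less[OF ij(1)] \<pi>_less[OF ij(2)], of w] ij
    by (simp add: psi_of_nat)
qed

lemma G_sub_rank_stat_eq: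
  assumes S: "finite S" and nonempty: "assignments S m \<noteq> {}"
  shows "G_sub (rank_stat g \<phi>) S m y c = measure_pmf.prob
    (pmf_of_set (assignments {..<card S} m)) {u. c \<le> rank_stat g \<phi> (card S) u real}"
proof -
  let ?k = "card S"
  define \<pi> where "\<pi> = inv_into {..<?k} (sort_position ?k (subvec S y))"
  define h where "h p = sorted_list_of_set S ! \<pi> p" for p
  define \<Phi> where "\<Phi> a p = (if p \<in> {..<?k} then a (h p) else 0)" for a :: "nat \<Rightarrow> nat" and p
  have "bij_betw \<pi> {..<?k} {..<?k}"
    unfolding \<pi>_def using bij_betw_inv_into[OF bij_betw_sort_position] .
  moreover have "bij_betw ((!) (sorted_list_of_set S)) {..<?k} S"
    using S by (intro bij_betw_nth) simp_all
  ultimately have "bij_betw h {..<?k} S"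
    unfolding h_def using bij_betw_trans by (auto simp: comp_def)
  then have \<Phi>: "bij_betw \<Phi> (assignments S m) (assignments {..<?k} m)"
    unfolding \<Phi>_def by (rule bij_betw_assignments)
  have "t_sub (rank_stat g \<phi>) S a y = rank_stat g \<phi> ?k (\<Phi> a) real" for a
    unfolding t_sub_def rank_stat_eq_sorted[of g \<phi> ?k _ "subvec S y"] \<pi>_def[symmetric]
    by (rule rank_stat_cong) (simp_all add: \<Phi>_def h_def subvec_def)
  then have "G_sub (rank_stat g \<phi>) S m y c = measure_pmf.prob
      (map_pmf \<Phi> (pmf_of_set (assignments S m))) {u. c \<le> rank_stat g \<phi> ?k u real}"
    by (simp add: G_sub_def vimage_def)
  also have "map_pmf \<Phi> (pmf_of_set (assignments S m)) = pmf_of_set (assignments {..<?k} m)"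
    using \<Phi> nonempty S by (intro map_pmf_of_set_bij_betw finite_assignments)
  finally show ?thesis .
qed

lemma observed_set_sharp:
  assumes "\<forall>i<n. M1 i = M0 i" "\<forall>i. z i \<le> 1"
  shows "observed_set n M0 M1 z = {i. i < n \<and> M0 i = 1}"
proof -
  have "z i * M1 i + (1 - z i) * M0 i = M0 i" if "i < n" for i
  proof -
    have "z i = 0 \<or> z i = 1" using assms(2) le_Suc_eq by auto
    then show ?thesis using assms(1) that by auto
  qed
  then show ?thesis
    unfolding observed_set_def by (intro Collect_cong conj_cong refl) simp
qed

lemma p_value_sharp_null:
  assumes sharp: "\<forall>i<n. M1 i = M0 i" and null: "\<forall>i<n. Y1 i - Y0 i = \<delta> i"
    and z: "z \<in> assignments {0..<n} n1"
  defines "S \<equiv> {i. i < n \<and> M0 i = 1}"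
  shows "p_value (rank_stat g \<phi>) n M0 M1 Y0 Y1 \<delta> y0 z =
    measure_pmf.prob (pmf_of_set (assignments S (\<Sum>i\<in>S. z i)))
      {b. t_sub (rank_stat g \<phi>) S (restrict_to S z) Y0 \<le> t_sub (rank_stat g \<phi>) S b Y0}"
proof -
  have S: "finite S" "S \<subseteq> {..<n}"
    unfolding S_def by auto
  have observed: "observed_set n M0 M1 z = S"
    using observed_set_sharp[OF sharp] z unfolding S_def assignments_def by simp
  have "realized Y0 Y1 z i - \<delta> i * real (z i) = Y0 i" if "i \<in> S" for i
    using null S(2) that unfolding realized_def by (auto simp: algebra_simps)
  moreover have "sorted_list_of_set S ! p \<in> S" if "p < card S" for p
    using S(1) that by (metis nth_mem length_sorted_list_of_set set_sorted_list_of_set)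
  ultimately have statistic: "t_sub (rank_stat g \<phi>) S z (\<lambda>i. realized Y0 Y1 z i - \<delta> i * real (z i))
      = t_sub (rank_stat g \<phi>) S (restrict_to S z) Y0"
    unfolding t_sub_def by (intro rank_stat_cong) (auto simp: subvec_def restrict_to_def)
  have "assignments S (\<Sum>i\<in>S. z i) \<noteq> {}"
    using restrict_to_in_assignments[OF z] by blast
  then have "G_sub (rank_stat g \<phi>) S (\<Sum>i\<in>S. z i) y0 = G_sub (rank_stat g \<phi>) S (\<Sum>i\<in>S. z i) Y0"
    using S(1) by (simp add: fun_eq_iff G_sub_rank_stat_eq)
  then show ?thesis
    unfolding p_value_def Let_def observed statistic by (simp add: G_sub_def)
qed

theorem theorem8:
  fixes n n1 :: nat
    and M0 M1 :: "nat \<Rightarrow> nat"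
    and Y0 Y1 \<delta> y0 :: "nat \<Rightarrow> real"
    and \<phi> :: "nat \<Rightarrow> real"
    and tR :: "nat \<Rightarrow> (nat \<Rightarrow> nat) \<Rightarrow> (nat \<Rightarrow> real) \<Rightarrow> real"
    and \<alpha> :: real
  assumes n1_pos: "1 \<le> n1" and n0_pos: "n1 < n"
    and M_bin: "\<forall>i<n. M0 i \<le> 1 \<and> M1 i \<le> 1"
    and sharp: "\<forall>i<n. M1 i = M0 i"
    and mono_phi: "mono \<phi>"
    and stat: "tR = t_rank \<phi> \<or> tR = t_ctrl \<phi>"
    and H_delta: "\<forall>i<n. Y1 i - Y0 i = \<delta> i"
    and alpha: "0 < \<alpha>" "\<alpha> < 1"
  shows "measure_pmf.prob (pmf_of_set (assignments {0..<n} n1))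
           {z. p_value tR n M0 M1 Y0 Y1 \<delta> y0 z \<le> \<alpha>} \<le> \<alpha>"
proof -
  obtain g where tR: "tR = rank_stat g \<phi>"
    using stat t_rank_eq_rank_stat t_ctrl_eq_rank_stat by blast
  define S where "S = {i. i < n \<and> M0 i = 1}"
  define T where "T b = t_sub tR S b Y0" for b
  let ?A = "assignments {0..<n} n1"
  have A: "?A \<noteq> {}" "finite ?A"
    using n0_pos by (simp_all add: assignments_nonempty finite_assignments)
  have "measure_pmf.prob (pmf_of_set ?A) {z. p_value tR n M0 M1 Y0 Y1 \<delta> y0 z \<le> \<alpha>}
      = measure_pmf.prob (pmf_of_set ?A) {z. measure_pmf.prob
          (pmf_of_set (assignments S (\<Sum>i\<in>S. z i))) {b. T (restrict_to S z) \<le> T b} \<le> \<alpha>}"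
    using p_value_sharp_null[OF sharp H_delta] unfolding tR T_def S_def
    by (intro measure_prob_cong_0) (auto simp: pmf_eq_0_set_pmf set_pmf_of_set[OF A])
  also have "\<dots> \<le> \<alpha>"
    using A(1) alpha(1) unfolding S_def by (intro conditional_randomization_test_valid) auto
  finally show ?thesis .
qed

end
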